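(* Suppose $m\ge5$ and $n\ge5$. Then there is no term order $\omega$ on $\mathbb{K}[y_S]$ such that $I_{P_n}$ has a Gröbner basis with respect to $\omega$ all of whose elements are weakly $Q_{m,n}$-homogeneous with respect to $\omega$.
   Context: A DAG's v-structure is $i\to k\leftarrow j$ with $i,j$ non-adjacent; Markov equivalence classes with a given skeleton are determined by their v-structures, and for an undirected graph $G$ the characteristic imset ideal $I_G$ is the kernel of the map sending the variable of a class to $\prod_{S:c(S)=1}t_S$, where $c(S)=1$ iff some $i\in S$ has $S\setminus\{i\}\subseteq\mathrm{pa}(i)$ in a DAG of the class. $P_n$ is the path $1-2-\cdots-n$; its classes are indexed by collider sets $S\subseteq\{2,\dots,n-1\}$ with no two consecutive integers, giving variables $y_S$ of the ring containing $I_{P_n}$. With $N=n+m-4$, $P'_m$ is the path with vertices $n-1,n,\dots,N,1,2$ in this order; its classes are indexed by sets $S'$ of interior vertices (among $n,\dots,N,1$) with no two consecutive along the path. $Q_{m,n}$ is the set of pairs $(S',S)$ of such collider sets with no two elements of $S'\cup S$ cyclically consecutive modulo $N$ and $S'\cup S\ne\emptyset$. A polynomial $f\in\mathbb{K}[y_S]$ homogeneous of degree $d$ with $\omega$-leading monomial $y_{S_1}\cdots y_{S_d}$ is weakly $Q_{m,n}$-homogeneous w.r.t. $\omega$ if for every monomial $y_{T_1}\cdots y_{T_d}$ of $f$ there is a permutation $\sigma$ of $[d]$ with $\{(S'_1,\dots,S'_d):(S'_\ell,S_\ell)\in Q_{m,n}\ \forall\ell\}\subseteq\{(S'_1,\dots,S'_d):(S'_\ell,T_{\sigma(\ell)})\in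 Q_{m,n}\ \forall\ell\}$. *)

theory Defs
  imports "HOL-Library.Poly_Mapping" "HOL-Combinatorics.Permutations"
begin

text \<open>A path graph is given by the list of its vertices in order (edges between
consecutive entries).  An orientation d of the path says for each edge index k
(edge between vs!k and vs!(k+1)) whether it is directed vs!k -> vs!(k+1) (True)
or vs!(k+1) -> vs!k (False).  Every orientation of a path is acyclic.\<close>

definition path_parents :: "nat list \<Rightarrow> (nat \<Rightarrow> bool) \<Rightarrow> nat \<Rightarrow> nat set" where
  "path_parents vs d v = {u. \<exists>k. k + 1 < length vs \<and>
      ((vs!k = u \<and> vs!(k+1) = v \<and> d k) \<or> (vs!k = v \<and> vs!(k+1) = u \<and> \<not> d k))}"

text \<open>Colliders i -> k <- j; on a path these are exactly the v-structures.\<close>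
definition path_colliders :: "nat list \<Rightarrow> (nat \<Rightarrow> bool) \<Rightarrow> nat set" where
  "path_colliders vs d = {v. \<exists>k. k + 2 < length vs \<and> vs!(k+1) = v \<and> d k \<and> \<not> d (k+1)}"

text \<open>Index sets of the Markov equivalence classes: sets of interior vertices
with no two consecutive along the path.\<close>
definition collider_sets :: "nat list \<Rightarrow> nat set set" where
  "collider_sets vs = {S. S \<subseteq> set (butlast (tl vs)) \<and>
      (\<forall>k. k + 1 < length vs \<longrightarrow> \<not> (vs!k \<in> S \<and> vs!(k+1) \<in> S))}"

text \<open>Characteristic imset of the class with collider set S, evaluated at T.\<close>
definition char_imset :: "nat list \<Rightarrow> nat set \<Rightarrow> nat set \<Rightarrow> bool" where
  "char_imset vs S T \<longleftrightarrow> (\<exists>d. path_colliders vs d = S \<and>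
      (\<exists>i\<in>T. T - {i} \<subseteq> path_parents vs d i))"

definition path_P :: "nat \<Rightarrow> nat list" where
  "path_P n = [1..<n+1]"

definition path_P' :: "nat \<Rightarrow> nat \<Rightarrow> nat list" where
  "path_P' m n = [n-1..<(n+m-4)+1] @ [1, 2]"

type_synonym monom = "nat set \<Rightarrow>\<^sub>0 nat"
type_synonym 'k ypoly = "monom \<Rightarrow>\<^sub>0 'k"

definition in_ring :: "nat set set \<Rightarrow> ('k::zero) ypoly \<Rightarrow> bool" where
  "in_ring V f \<longleftrightarrow> (\<forall>a\<in>Poly_Mapping.keys f. Poly_Mapping.keys a \<subseteq> V)"

text \<open>Exponent (in the t_T) of the image of the monomial a under y_S |-> prod_{T: c_S(T)=1} t_T.\<close>
definition imset_mon :: "nat list \<Rightarrow> monom \<Rightarrow> monom" where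
  "imset_mon vs a = (\<Sum>S\<in>Poly_Mapping.keys a. (\<Sum>T\<in>{T. T \<subseteq> set vs \<and> char_imset vs S T}.
                        Poly_Mapping.single T (Poly_Mapping.lookup a S)))"

text \<open>The ring map y_S |-> prod_{T: c_S(T)=1} t_T, applied to a polynomial.\<close>
definition imset_hom :: "nat list \<Rightarrow> ('k::field) ypoly \<Rightarrow> 'k ypoly" where
  "imset_hom vs f = (\<Sum>a\<in>Poly_Mapping.keys f. Poly_Mapping.single (imset_mon vs a) (Poly_Mapping.lookup f a))"

definition imset_ideal :: "nat list \<Rightarrow> ('k::field) ypoly set" where
  "imset_ideal vs = {f. in_ring (collider_sets vs) f \<and> imset_hom vs f = 0}"

definition term_order :: "nat set set \<Rightarrow> (monom \<Rightarrow> monom \<Rightarrow> bool) \<Rightarrow> bool" where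
  "term_order V le \<longleftrightarrow>
    (\<forall>a. Poly_Mapping.keys a \<subseteq> V \<longrightarrow> le a a) \<and>
    (\<forall>a b. Poly_Mapping.keys a \<subseteq> V \<longrightarrow> Poly_Mapping.keys b \<subseteq> V \<longrightarrow> le a b \<longrightarrow> le b a \<longrightarrow> a = b) \<and>
    (\<forall>a b c. Poly_Mapping.keys a \<subseteq> V \<longrightarrow> Poly_Mapping.keys b \<subseteq> V \<longrightarrow> Poly_Mapping.keys c \<subseteq> V \<longrightarrow> le a b \<longrightarrow> le b c \<longrightarrow> le a c) \<and>
    (\<forall>a b. Poly_Mapping.keys a \<subseteq> V \<longrightarrow> Poly_Mapping.keys b \<subseteq> V \<longrightarrow> le a b \<or> le b a) \<and>
    (\<forall>a. Poly_Mapping.keys a \<subseteq> V \<longrightarrow> le 0 a) \<and>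
    (\<forall>a b c. Poly_Mapping.keys a \<subseteq> V \<longrightarrow> Poly_Mapping.keys b \<subseteq> V \<longrightarrow> Poly_Mapping.keys c \<subseteq> V \<longrightarrow> le a b \<longrightarrow> le (a + c) (b + c))"

definition lead_mon :: "(monom \<Rightarrow> monom \<Rightarrow> bool) \<Rightarrow> ('k::zero) ypoly \<Rightarrow> monom" where
  "lead_mon le f = (THE a. a \<in> Poly_Mapping.keys f \<and> (\<forall>b\<in>Poly_Mapping.keys f. le b a))"

definition mon_dvd :: "monom \<Rightarrow> monom \<Rightarrow> bool" where
  "mon_dvd a b \<longleftrightarrow> (\<forall>S. Poly_Mapping.lookup a S \<le> Poly_Mapping.lookup b S)"

definition groebner_basis :: "(monom \<Rightarrow> monom \<Rightarrow> bool) \<Rightarrow> ('k::field) ypoly set \<Rightarrow> 'k ypoly set \<Rightarrow> bool" where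
  "groebner_basis le I G \<longleftrightarrow> finite G \<and> G \<subseteq> I \<and>
     (\<forall>f\<in>I. f \<noteq> 0 \<longrightarrow> (\<exists>g\<in>G. g \<noteq> 0 \<and> mon_dvd (lead_mon le g) (lead_mon le f)))"

definition mon_deg :: "monom \<Rightarrow> nat" where
  "mon_deg a = (\<Sum>S\<in>Poly_Mapping.keys a. Poly_Mapping.lookup a S)"

definition cyc_consec :: "nat \<Rightarrow> nat \<Rightarrow> nat \<Rightarrow> bool" where
  "cyc_consec N x y \<longleftrightarrow> (x + 1) mod N = y mod N"

definition Q_set :: "nat \<Rightarrow> nat \<Rightarrow> (nat set \<times> nat set) set" where
  "Q_set m n = {(S', S). S' \<in> collider_sets (path_P' m n) \<and> S \<in> collider_sets (path_P n) \<and>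
      (\<forall>x\<in>S' \<union> S. \<forall>y\<in>S' \<union> S. \<not> cyc_consec (n + m - 4) x y) \<and> S' \<union> S \<noteq> {}}"

definition represents :: "nat set list \<Rightarrow> monom \<Rightarrow> bool" where
  "represents Ss a \<longleftrightarrow> (\<forall>S. count (mset Ss) S = Poly_Mapping.lookup a S)"

definition weakly_Q_hom :: "nat \<Rightarrow> nat \<Rightarrow> (monom \<Rightarrow> monom \<Rightarrow> bool) \<Rightarrow> ('k::zero) ypoly \<Rightarrow> bool" where
  "weakly_Q_hom m n le f \<longleftrightarrow> f \<noteq> 0 \<and> (\<exists>d. (\<forall>a\<in>Poly_Mapping.keys f. mon_deg a = d) \<and>
     (\<forall>a\<in>Poly_Mapping.keys f. \<forall>Ss Ts. length Ss = d \<longrightarrow> length Ts = d \<longrightarrow>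
        represents Ss (lead_mon le f) \<longrightarrow> represents Ts a \<longrightarrow>
        (\<exists>\<sigma>. \<sigma> permutes {..<d} \<and>
           {S's. length S's = d \<and> (\<forall>l<d. (S's!l, Ss!l) \<in> Q_set m n)} \<subseteq>
           {S's. length S's = d \<and> (\<forall>l<d. (S's!l, Ts!(\<sigma> l)) \<in> Q_set m n)})))"

end

theory Submission
  imports Defs
begin

text \<open>On the path P_n the characteristic imset of the class with collider set S takes the
  value 1 exactly on the vertices, the edges and the closed neighbourhoods {i-1,i,i+1} of the
  colliders i \<in> S. Hence y_{{2,n-1}} y_{} and y_{2} y_{n-1} have the same image and their difference
  lies in I_{P_n}, so some element g of the Groebner basis has a leading monomial dividing one of
  them. Being in the kernel, g has a second monomial with the same image as its leading one. In the
  image of a monomial a vertex coordinate is its degree, and the coordinate of the neighbourhood of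
  an interior vertex i counts the factors containing i; comparing these forces the two monomials of
  g to be y_{{2,n-1}} y_{} and y_{2} y_{n-1}.
  Weak Q-homogeneity of g then fails. If y_{{2,n-1}} y_{} leads, the pair ({}, {1,n}) of
  P'_m-collider sets is compatible with it, but {1,n} is compatible with neither {2} nor {n-1}, as
  1, 2 and n-1, n are consecutive. If y_{2} y_{n-1} leads, ({}, {}) is compatible with it, but no
  pair with empty union lies in Q.\<close>

lemma length_path_P: "length (path_P n) = n"
  by (simp add: path_P_def)

lemma path_P_nth: "k < n \<Longrightarrow> path_P n ! k = k + 1"
  unfolding path_P_def by (subst nth_upt) auto

lemma set_path_P: "set (path_P n) = {1..n}"
  by (auto simp: path_P_def)

lemma set_interior_path_P: "set (butlast (tl (path_P n))) = {2..n-1}"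
proof -
  have "tl (path_P n) = [2..<n+1]"
    by (auto simp: path_P_def tl_upt numeral_2_eq_2)
  then show ?thesis by auto
qed

lemma empty_in_collider_sets: "{} \<in> collider_sets vs"
  unfolding collider_sets_def by simp

lemma collider_sets_path_P_iff:
  "S \<in> collider_sets (path_P n) \<longleftrightarrow> S \<subseteq> {2..n-1} \<and> (\<forall>i\<in>S. i + 1 \<notin> S)"
proof
  assume S: "S \<in> collider_sets (path_P n)"
  then have sub: "S \<subseteq> {2..n-1}"
    by (simp add: collider_sets_def set_interior_path_P)
  moreover have "i + 1 \<notin> S" if i: "i \<in> S" for i
  proof
    assume "i + 1 \<in> S"
    then have "2 \<le> i" "i + 1 \<le> n - 1"
      using sub i by auto
    then have "path_P n ! (i - 1) = i" "path_P n ! (i - 1 + 1) = i + 1" "i - 1 + 1 < length (path_P n)"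
      by (simp_all add: length_path_P path_P_nth)
    then show False
      using S i \<open>i + 1 \<in> S\<close> unfolding collider_sets_def by (metis (no_types, lifting) mem_Collect_eq)
  qed
  ultimately show "S \<subseteq> {2..n-1} \<and> (\<forall>i\<in>S. i + 1 \<notin> S)" by blast
next
  assume "S \<subseteq> {2..n-1} \<and> (\<forall>i\<in>S. i + 1 \<notin> S)"
  then show "S \<in> collider_sets (path_P n)"
    unfolding collider_sets_def set_interior_path_P by (simp add: length_path_P path_P_nth)
qed

lemma collider_sets_path_PD:
  "S \<in> collider_sets (path_P n) \<Longrightarrow> i \<in> S \<Longrightarrow> 2 \<le> i \<and> i < n \<and> i + 1 \<notin> S"
  unfolding collider_sets_path_P_iff by force

lemma path_parents_path_P_iff:
  "u \<in> path_parents (path_P n) d v \<longleftrightarrow>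
     (2 \<le> v \<and> v \<le> n \<and> u = v - 1 \<and> d (v - 2)) \<or> (1 \<le> v \<and> v + 1 \<le> n \<and> u = v + 1 \<and> \<not> d (v - 1))"
proof
  assume "u \<in> path_parents (path_P n) d v"
  then obtain k where k: "k + 1 < n"
    "(path_P n ! k = u \<and> path_P n ! (k+1) = v \<and> d k) \<or> (path_P n ! k = v \<and> path_P n ! (k+1) = u \<and> \<not> d k)"
    unfolding path_parents_def length_path_P by blast
  moreover have "path_P n ! k = k + 1" "path_P n ! (k+1) = k + 2"
    using k(1) path_P_nth[of k n] path_P_nth[of "k+1" n] by simp_all
  ultimately show "(2 \<le> v \<and> v \<le> n \<and> u = v - 1 \<and> d (v - 2)) \<or> (1 \<le> v \<and> v + 1 \<le> n \<and> u = v + 1 \<and> \<not> d (v - 1))"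
    by auto
next
  assume "(2 \<le> v \<and> v \<le> n \<and> u = v - 1 \<and> d (v - 2)) \<or> (1 \<le> v \<and> v + 1 \<le> n \<and> u = v + 1 \<and> \<not> d (v - 1))"
  then consider (forward) "2 \<le> v" "v \<le> n" "u = v - 1" "d (v - 2)"
    | (backward) "1 \<le> v" "v + 1 \<le> n" "u = v + 1" "\<not> d (v - 1)"
    by blast
  then show "u \<in> path_parents (path_P n) d v"
  proof cases
    case forward
    then have "path_P n ! (v - 2) = u" "path_P n ! (v - 2 + 1) = v" "v - 2 + 1 < n"
      using path_P_nth[of "v - 2" n] path_P_nth[of "v - 2 + 1" n] by auto
    then show ?thesis
      using forward unfolding path_parents_def length_path_P by blast
  next
    case backward
    then have "path_P n ! (v - 1) = v" "path_P n ! (v - 1 + 1) = u" "v - 1 + 1 < n"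
      using path_P_nth[of "v - 1" n] path_P_nth[of "v - 1 + 1" n] by auto
    then show ?thesis
      using backward unfolding path_parents_def length_path_P by blast
  qed
qed

lemma path_colliders_path_P_iff:
  "v \<in> path_colliders (path_P n) d \<longleftrightarrow> 2 \<le> v \<and> v < n \<and> d (v - 2) \<and> \<not> d (v - 1)"
proof
  assume "v \<in> path_colliders (path_P n) d"
  then obtain k where k: "k + 2 < n" "path_P n ! (k+1) = v" "d k" "\<not> d (k+1)"
    unfolding path_colliders_def length_path_P by blast
  moreover have "path_P n ! (k+1) = k + 2"
    using k(1) path_P_nth[of "k+1" n] by simp
  ultimately show "2 \<le> v \<and> v < n \<and> d (v - 2) \<and> \<not> d (v - 1)"
    by (auto simp: numeral_2_eq_2)
next
  assume v: "2 \<le> v \<and> v < n \<and> d (v - 2) \<and> \<not> d (v - 1)"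
  then have "v - 2 + 2 < n" "path_P n ! (v - 2 + 1) = v" "d (v - 2)" "\<not> d (v - 2 + 1)"
    using path_P_nth[of "v - 1" n] by (auto simp: Suc_diff_Suc numeral_2_eq_2)
  then show "v \<in> path_colliders (path_P n) d"
    unfolding path_colliders_def length_path_P by blast
qed

text \<open>Edge k joins k+1 and k+2; it points to k+2 unless k+1 is a collider, so that both edges at a
  collider point into it.\<close>

lemma path_colliders_orientation:
  assumes "S \<in> collider_sets (path_P n)"
  shows "path_colliders (path_P n) (\<lambda>k. k + 1 \<notin> S) = S"
proof (rule set_eqI)
  fix v
  show "v \<in> path_colliders (path_P n) (\<lambda>k. k + 1 \<notin> S) \<longleftrightarrow> v \<in> S"
  proof
    assume "v \<in> path_colliders (path_P n) (\<lambda>k. k + 1 \<notin> S)"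
    then have "2 \<le> v" "v - 1 + 1 \<in> S"
      unfolding path_colliders_path_P_iff by auto
    then show "v \<in> S" by simp
  next
    assume v: "v \<in> S"
    then have "2 \<le> v" "v < n" "v - 1 \<notin> S"
      using collider_sets_path_PD[OF assms v] collider_sets_path_PD[OF assms, of "v - 1"] by auto
    moreover have "v - 2 + 1 = v - 1" "v - 1 + 1 = v"
      using \<open>2 \<le> v\<close> by auto
    ultimately show "v \<in> path_colliders (path_P n) (\<lambda>k. k + 1 \<notin> S)"
      unfolding path_colliders_path_P_iff using v by simp
  qed
qed

section \<open>The characteristic imset on P_n\<close>

definition vertex_or_edge :: "nat \<Rightarrow> nat set \<Rightarrow> bool" where
  "vertex_or_edge n T \<longleftrightarrow> (\<exists>i. T = {i}) \<or> (\<exists>i. 1 \<le> i \<and> i < n \<and> T = {i, i + 1})"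

definition closed_nbhd :: "nat \<Rightarrow> nat set" where
  "closed_nbhd i = {i - 1, i, i + 1}"

lemma char_imset_path_P_cases:
  assumes "char_imset (path_P n) S T"
  shows "vertex_or_edge n T \<or> (\<exists>i\<in>S. T = closed_nbhd i)"
proof -
  obtain d j where colliders: "path_colliders (path_P n) d = S" and j: "j \<in> T"
    and parents: "T - {j} \<subseteq> path_parents (path_P n) d j"
    using assms unfolding char_imset_def by blast
  have left: "2 \<le> j \<and> j \<le> n \<and> d (j - 2)" if "j - 1 \<in> T - {j}"
    using that parents path_parents_path_P_iff[of "j - 1" n d j] by auto
  have right: "1 \<le> j \<and> j + 1 \<le> n \<and> \<not> d (j - 1)" if "j + 1 \<in> T - {j}"
    using that parents path_parents_path_P_iff[of "j + 1" n d j] by auto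
  have T: "T \<subseteq> {j - 1, j, j + 1}"
    using parents path_parents_path_P_iff[of _ n d j] by blast
  show ?thesis
  proof (cases "j - 1 \<in> T - {j}"; cases "j + 1 \<in> T - {j}")
    assume "j - 1 \<in> T - {j}" "j + 1 \<in> T - {j}"
    then have "j \<in> S" "T = closed_nbhd j"
      using left right T j unfolding colliders[symmetric] path_colliders_path_P_iff closed_nbhd_def
      by auto
    then show ?thesis by blast
  next
    assume "j - 1 \<in> T - {j}" "j + 1 \<notin> T - {j}"
    then have "T = {j - 1, j - 1 + 1}" "1 \<le> j - 1" "j - 1 < n"
      using left T j by auto
    then show ?thesis unfolding vertex_or_edge_def by blast
  next
    assume "j - 1 \<notin> T - {j}" "j + 1 \<in> T - {j}"
    then have "T = {j, j + 1}" "1 \<le> j" "j < n"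
      using right T j by auto
    then show ?thesis unfolding vertex_or_edge_def by blast
  next
    assume "j - 1 \<notin> T - {j}" "j + 1 \<notin> T - {j}"
    then have "T = {j}"
      using T j by auto
    then show ?thesis unfolding vertex_or_edge_def by blast
  qed
qed

lemma char_imset_path_P_intro:
  assumes S: "S \<in> collider_sets (path_P n)"
    and T: "vertex_or_edge n T \<or> (\<exists>i\<in>S. T = closed_nbhd i)"
  shows "char_imset (path_P n) S T"
proof -
  let ?d = "\<lambda>k. k + 1 \<notin> S"
  have "\<exists>j\<in>T. T - {j} \<subseteq> path_parents (path_P n) ?d j"
    using T unfolding vertex_or_edge_def
  proof (elim disjE exE conjE bexE)
    fix i assume "T = {i}"
    then show ?thesis by auto
  next
    fix i assume i: "1 \<le> i" "i < n" "T = {i, i + 1}"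
    show ?thesis
    proof (cases "i \<in> S")
      case True
      then have "i + 1 \<in> path_parents (path_P n) ?d i"
        unfolding path_parents_path_P_iff using i by simp
      then show ?thesis using i by auto
    next
      case False
      then have "i \<in> path_parents (path_P n) ?d (i + 1)"
        unfolding path_parents_path_P_iff using i by simp
      then show ?thesis using i by auto
    qed
  next
    fix i assume i: "i \<in> S" "T = closed_nbhd i"
    have "2 \<le> i" "i < n" "i + 1 \<notin> S" "i - 1 \<notin> S"
      using collider_sets_path_PD[OF S i(1)] collider_sets_path_PD[OF S, of "i - 1"] i(1) by auto
    then have "i - 1 \<in> path_parents (path_P n) ?d i" "i + 1 \<in> path_parents (path_P n) ?d i"
      unfolding path_parents_path_P_iff using i(1) by (auto simp: Suc_diff_Suc numeral_2_eq_2)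
    then show ?thesis using i unfolding closed_nbhd_def by auto
  qed
  then show ?thesis
    unfolding char_imset_def using path_colliders_orientation[OF S] by blast
qed

lemma char_imset_path_P_iff:
  "S \<in> collider_sets (path_P n) \<Longrightarrow>
     char_imset (path_P n) S T \<longleftrightarrow> vertex_or_edge n T \<or> (\<exists>i\<in>S. T = closed_nbhd i)"
  using char_imset_path_P_cases char_imset_path_P_intro by blast

lemma closed_nbhd_not_vertex_or_edge: "2 \<le> i \<Longrightarrow> \<not> vertex_or_edge n (closed_nbhd i)"
proof
  assume i: "2 \<le> i" and "vertex_or_edge n (closed_nbhd i)"
  then obtain x where "closed_nbhd i = {x} \<or> closed_nbhd i = {x, x + 1}"
    unfolding vertex_or_edge_def by blast
  then have "i - 1 \<in> {x, x + 1}" "i + 1 \<in> {x, x + 1}"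
    unfolding closed_nbhd_def by blast+
  then show False
    using i by auto
qed

lemma closed_nbhd_inj: "2 \<le> i \<Longrightarrow> 2 \<le> j \<Longrightarrow> closed_nbhd i = closed_nbhd j \<Longrightarrow> i = j"
proof -
  assume ij: "2 \<le> i" "2 \<le> j" "closed_nbhd i = closed_nbhd j"
  then have "i + 1 \<in> closed_nbhd j" "j + 1 \<in> closed_nbhd i"
    unfolding closed_nbhd_def by auto
  then show "i = j"
    using ij(1,2) unfolding closed_nbhd_def by auto
qed

lemma char_imset_closed_nbhd_iff:
  assumes S: "S \<in> collider_sets (path_P n)" and "2 \<le> i"
  shows "char_imset (path_P n) S (closed_nbhd i) \<longleftrightarrow> i \<in> S"
  using char_imset_path_P_iff[OF S] closed_nbhd_not_vertex_or_edge[OF \<open>2 \<le> i\<close>]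
    closed_nbhd_inj[OF \<open>2 \<le> i\<close>] collider_sets_path_PD[OF S] by blast

lemma char_imset_singleton: "S \<in> collider_sets (path_P n) \<Longrightarrow> char_imset (path_P n) S {i}"
  by (rule char_imset_path_P_intro) (auto simp: vertex_or_edge_def)

lemma count_list_filter: "count_list (filter P xs) x = (if P x then count_list xs x else 0)"
  by (induction xs) auto

lemma keys_represents: "represents Ts a \<Longrightarrow> Poly_Mapping.keys a = set Ts"
  unfolding represents_def by (intro set_eqI) (metis count_mset_0_iff in_keys_iff)

lemma sum_lookup_represents:
  assumes "represents Ts a"
  shows "(\<Sum>S\<in>Poly_Mapping.keys a. if P S then Poly_Mapping.lookup a S else 0) = length (filter P Ts)"
proof -
  have lookup: "Poly_Mapping.lookup a S = count_list Ts S" for S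
    using assms unfolding represents_def by (simp add: count_mset)
  have "(\<Sum>S\<in>Poly_Mapping.keys a. if P S then Poly_Mapping.lookup a S else 0)
      = (\<Sum>S\<in>set Ts. count_list (filter P Ts) S)"
    unfolding keys_represents[OF assms] lookup count_list_filter by simp
  also have "\<dots> = length (filter P Ts)"
    by (rule sum_count_set) auto
  finally show ?thesis .
qed

lemma mon_deg_represents: "represents Ts a \<Longrightarrow> mon_deg a = length Ts"
  using sum_lookup_represents[of Ts a "\<lambda>_. True"] unfolding mon_deg_def by simp

lemma represents_mset_eq: "represents Ts a \<Longrightarrow> represents Ts' b \<Longrightarrow> mset Ts = mset Ts' \<Longrightarrow> a = b"
  unfolding represents_def by (intro poly_mapping_eqI) metis

lemma represents_exists: "\<exists>Ts. represents Ts a"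
proof -
  have "finite {S. 0 < Poly_Mapping.lookup a S}"
    using finite_keys[of a] by (simp add: in_keys_iff[symmetric])
  moreover obtain Ts where "mset Ts = Abs_multiset (Poly_Mapping.lookup a)"
    using ex_mset by blast
  ultimately have "represents Ts a"
    unfolding represents_def by (simp add: count_Abs_multiset)
  then show ?thesis ..
qed

lemma lookup_imset_mon:
  "Poly_Mapping.lookup (imset_mon vs a) T =
     (\<Sum>S\<in>Poly_Mapping.keys a. if T \<subseteq> set vs \<and> char_imset vs S T then Poly_Mapping.lookup a S else 0)"
proof -
  have "finite {T. T \<subseteq> set vs \<and> char_imset vs S T}" for S
    by (rule finite_subset[of _ "Pow (set vs)"]) auto
  then have "(\<Sum>T'\<in>{T. T \<subseteq> set vs \<and> char_imset vs S T}. Poly_Mapping.lookup (Poly_Mapping.single T' c) T)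
      = (if T \<subseteq> set vs \<and> char_imset vs S T then c else 0)" for S and c :: nat
    by (simp add: lookup_single when_def sum.delta')
  then show ?thesis
    unfolding imset_mon_def lookup_sum by simp
qed

lemma lookup_imset_mon_represents:
  "represents Ts a \<Longrightarrow>
     Poly_Mapping.lookup (imset_mon vs a) T = length (filter (\<lambda>S. T \<subseteq> set vs \<and> char_imset vs S T) Ts)"
  unfolding lookup_imset_mon by (rule sum_lookup_represents)

lemma lookup_imset_mon_closed_nbhd:
  assumes "represents Ts a" and "set Ts \<subseteq> collider_sets (path_P n)" and "2 \<le> i" "i < n"
  shows "Poly_Mapping.lookup (imset_mon (path_P n) a) (closed_nbhd i) = length (filter (\<lambda>S. i \<in> S) Ts)"
proof -
  have "closed_nbhd i \<subseteq> set (path_P n)"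
    using assms(3,4) unfolding closed_nbhd_def set_path_P by auto
  then have "filter (\<lambda>S. closed_nbhd i \<subseteq> set (path_P n) \<and> char_imset (path_P n) S (closed_nbhd i)) Ts
      = filter (\<lambda>S. i \<in> S) Ts"
    using assms(2,3) char_imset_closed_nbhd_iff by (intro filter_cong) blast+
  then show ?thesis
    unfolding lookup_imset_mon_represents[OF assms(1)] by simp
qed

lemma lookup_imset_mon_singleton:
  assumes "represents Ts a" and "set Ts \<subseteq> collider_sets (path_P n)" and "1 \<le> n"
  shows "Poly_Mapping.lookup (imset_mon (path_P n) a) {1} = length Ts"
proof -
  have "{1} \<subseteq> set (path_P n)"
    using assms(3) by (simp add: set_path_P)
  then have "filter (\<lambda>S. {1} \<subseteq> set (path_P n) \<and> char_imset (path_P n) S {1}) Ts = Ts"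
    using assms(2) char_imset_singleton by (intro filter_True) blast
  then show ?thesis
    unfolding lookup_imset_mon_represents[OF assms(1)] by simp
qed

lemma lookup_imset_hom:
  "Poly_Mapping.lookup (imset_hom vs f) M =
     (\<Sum>a\<in>Poly_Mapping.keys f. if imset_mon vs a = M then Poly_Mapping.lookup f a else 0)"
  unfolding imset_hom_def lookup_sum by (rule sum.cong) (auto simp: lookup_single when_def)

lemma imset_kernel_partner:
  assumes "imset_hom vs g = 0" and L: "L \<in> Poly_Mapping.keys g"
  shows "\<exists>a\<in>Poly_Mapping.keys g. a \<noteq> L \<and> imset_mon vs a = imset_mon vs L"
proof (rule ccontr)
  assume "\<not> ?thesis"
  then have "(\<Sum>a\<in>Poly_Mapping.keys g - {L}. if imset_mon vs a = imset_mon vs L then Poly_Mapping.lookup g a else 0) = 0"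
    by (intro sum.neutral) auto
  then have "Poly_Mapping.lookup (imset_hom vs g) (imset_mon vs L) = Poly_Mapping.lookup g L"
    unfolding lookup_imset_hom using L by (simp add: sum.remove)
  then show False
    using assms by (simp add: in_keys_iff)
qed

lemma
  assumes "term_order V le"
  shows term_order_refl: "Poly_Mapping.keys a \<subseteq> V \<Longrightarrow> le a a"
    and term_order_antisym: "Poly_Mapping.keys a \<subseteq> V \<Longrightarrow> Poly_Mapping.keys b \<subseteq> V \<Longrightarrow> le a b \<Longrightarrow> le b a \<Longrightarrow> a = b"
    and term_order_trans: "Poly_Mapping.keys a \<subseteq> V \<Longrightarrow> Poly_Mapping.keys b \<subseteq> V \<Longrightarrow> Poly_Mapping.keys c \<subseteq> V \<Longrightarrow>
      le a b \<Longrightarrow> le b c \<Longrightarrow> le a c"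
    and term_order_total: "Poly_Mapping.keys a \<subseteq> V \<Longrightarrow> Poly_Mapping.keys b \<subseteq> V \<Longrightarrow> le a b \<or> le b a"
  using assms unfolding term_order_def by blast+

lemma term_order_has_greatest:
  assumes "term_order V le" and "finite K" "K \<noteq> {}" "\<forall>a\<in>K. Poly_Mapping.keys a \<subseteq> V"
  shows "\<exists>x\<in>K. \<forall>b\<in>K. le b x"
  using assms(2-4)
proof (induction K rule: finite_ne_induct)
  case (singleton x)
  then show ?case
    using term_order_refl[OF assms(1)] by auto
next
  case (insert x F)
  then obtain y where y: "y \<in> F" "\<forall>b\<in>F. le b y" by auto
  have V: "Poly_Mapping.keys x \<subseteq> V" "Poly_Mapping.keys y \<subseteq> V" "\<forall>b\<in>F. Poly_Mapping.keys b \<subseteq> V"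
    using insert.prems y(1) by auto
  show ?case
  proof (cases "le y x")
    case True
    then have "\<forall>b\<in>insert x F. le b x"
      using term_order_refl[OF assms(1) V(1)] term_order_trans[OF assms(1) _ V(2,1)] V(3) y(2) by blast
    then show ?thesis by blast
  next
    case False
    then have "le x y"
      using term_order_total[OF assms(1) V(1,2)] by blast
    then show ?thesis
      using y by blast
  qed
qed

lemma lead_mon_in_keys:
  assumes "term_order V le" and "f \<noteq> 0" and V: "\<forall>a\<in>Poly_Mapping.keys f. Poly_Mapping.keys a \<subseteq> V"
  shows "lead_mon le f \<in> Poly_Mapping.keys f"
proof -
  obtain x where x: "x \<in> Poly_Mapping.keys f" "\<forall>b\<in>Poly_Mapping.keys f. le b x"
    using term_order_has_greatest[OF assms(1) finite_keys _ V] assms(2) by auto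
  have "lead_mon le f = x"
    unfolding lead_mon_def
  proof (rule the_equality)
    fix y assume "y \<in> Poly_Mapping.keys f \<and> (\<forall>b\<in>Poly_Mapping.keys f. le b y)"
    then show "y = x"
      using term_order_antisym[OF assms(1)] V x by blast
  qed (use x in blast)
  then show ?thesis
    using x by simp
qed

lemma imset_ideal_keys_subset:
  "f \<in> imset_ideal vs \<Longrightarrow> \<forall>a\<in>Poly_Mapping.keys f. Poly_Mapping.keys a \<subseteq> collider_sets vs"
  unfolding imset_ideal_def in_ring_def by blast

lemma lead_mon_in_keys_imset_ideal:
  "term_order (collider_sets vs) le \<Longrightarrow> f \<in> imset_ideal vs \<Longrightarrow> f \<noteq> 0 \<Longrightarrow> lead_mon le f \<in> Poly_Mapping.keys f"
  using lead_mon_in_keys imset_ideal_keys_subset by blast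

lemma imset_ideal_lead_partner:
  assumes "term_order (collider_sets vs) le" and "g \<in> imset_ideal vs" "g \<noteq> 0"
  shows "\<exists>a\<in>Poly_Mapping.keys g. a \<noteq> lead_mon le g \<and> imset_mon vs a = imset_mon vs (lead_mon le g)"
proof -
  have "imset_hom vs g = 0"
    using assms(2) unfolding imset_ideal_def by blast
  then show ?thesis
    using imset_kernel_partner lead_mon_in_keys_imset_ideal[OF assms] by blast
qed

section \<open>The binomial y_{{2,n-1}} y_{} - y_{2} y_{n-1}\<close>

definition mon_joint :: "nat \<Rightarrow> monom" where
  "mon_joint n = Poly_Mapping.single {2, n - 1} 1 + Poly_Mapping.single {} 1"

definition mon_apart :: "nat \<Rightarrow> monom" where
  "mon_apart n = Poly_Mapping.single {2} 1 + Poly_Mapping.single {n - 1} 1"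

definition binom_joint_apart :: "nat \<Rightarrow> ('k::field) ypoly" where
  "binom_joint_apart n = Poly_Mapping.single (mon_joint n) 1 - Poly_Mapping.single (mon_apart n) 1"

lemma represents_mon_joint: "represents [{2, n - 1}, {}] (mon_joint n)"
  unfolding represents_def mon_joint_def by (auto simp: lookup_add lookup_single when_def)

lemma represents_mon_apart: "n \<noteq> 3 \<Longrightarrow> represents [{2}, {n - 1}] (mon_apart n)"
  unfolding represents_def mon_apart_def by (auto simp: lookup_add lookup_single when_def)

lemma mon_joint_ne_mon_apart: "mon_joint n \<noteq> mon_apart n"
proof
  assume "mon_joint n = mon_apart n"
  then have "Poly_Mapping.lookup (mon_joint n) {} = Poly_Mapping.lookup (mon_apart n) {}"
    by simp
  then show False
    unfolding mon_joint_def mon_apart_def by (simp add: lookup_add lookup_single when_def)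
qed

lemma keys_binom_joint_apart:
  "Poly_Mapping.keys (binom_joint_apart n :: ('k::field) ypoly) = {mon_joint n, mon_apart n}"
proof (rule set_eqI)
  fix a
  show "a \<in> Poly_Mapping.keys (binom_joint_apart n :: 'k ypoly) \<longleftrightarrow> a \<in> {mon_joint n, mon_apart n}"
    unfolding in_keys_iff binom_joint_apart_def lookup_minus
    using mon_joint_ne_mon_apart[of n] by (auto simp: lookup_single when_def)
qed

lemma binom_joint_apart_nonzero: "(binom_joint_apart n :: ('k::field) ypoly) \<noteq> 0"
  using keys_binom_joint_apart[of n] by (metis empty_not_insert keys_zero)

lemma collider_sets_joint_apart:
  assumes "n \<ge> 5"
  shows "{2, n - 1} \<in> collider_sets (path_P n)" "{2} \<in> collider_sets (path_P n)"
    "{n - 1} \<in> collider_sets (path_P n)"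
  using assms unfolding collider_sets_path_P_iff by auto

lemma imset_mon_joint_eq_apart:
  assumes n: "n \<ge> 5"
  shows "imset_mon (path_P n) (mon_joint n) = imset_mon (path_P n) (mon_apart n)"
proof (rule poly_mapping_eqI)
  fix T
  let ?c = "\<lambda>S. T \<subseteq> set (path_P n) \<and> char_imset (path_P n) S T"
  have "?c S \<longleftrightarrow> T \<subseteq> set (path_P n) \<and> (vertex_or_edge n T \<or> (\<exists>i\<in>S. T = closed_nbhd i))"
    if "S \<in> collider_sets (path_P n)" for S
    using char_imset_path_P_iff[OF that] by blast
  moreover have "closed_nbhd 2 \<noteq> closed_nbhd (n - 1)"
  proof
    assume "closed_nbhd 2 = closed_nbhd (n - 1)"
    then have "2 = n - 1"
      using closed_nbhd_inj[of 2 "n - 1"] n by simp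
    then show False
      using n by simp
  qed
  ultimately have "length (filter ?c [{2, n - 1}, {}]) = length (filter ?c [{2}, {n - 1}])"
    using collider_sets_joint_apart[OF n] empty_in_collider_sets by auto
  then show "Poly_Mapping.lookup (imset_mon (path_P n) (mon_joint n)) T
      = Poly_Mapping.lookup (imset_mon (path_P n) (mon_apart n)) T"
    using n by (simp add: lookup_imset_mon_represents[OF represents_mon_joint]
        lookup_imset_mon_represents[OF represents_mon_apart])
qed

lemma binom_joint_apart_in_imset_ideal:
  assumes n: "n \<ge> 5"
  shows "(binom_joint_apart n :: ('k::field) ypoly) \<in> imset_ideal (path_P n)"
proof -
  have "in_ring (collider_sets (path_P n)) (binom_joint_apart n :: 'k ypoly)"
    using keys_represents[OF represents_mon_joint] keys_represents[OF represents_mon_apart]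
      collider_sets_joint_apart[OF n] empty_in_collider_sets n
    unfolding in_ring_def keys_binom_joint_apart by auto
  moreover have "imset_hom (path_P n) (binom_joint_apart n :: 'k ypoly) = 0"
    using mon_joint_ne_mon_apart[of n] imset_mon_joint_eq_apart[OF n]
    by (intro poly_mapping_eqI, unfold lookup_imset_hom keys_binom_joint_apart)
      (simp add: binom_joint_apart_def lookup_minus lookup_single when_def)
  ultimately show ?thesis
    unfolding imset_ideal_def by blast
qed

lemma subset_doubleton_cases: "C \<subseteq> {a, b} \<Longrightarrow> C = {} \<or> C = {a} \<or> C = {b} \<or> C = {a, b}"
  by (cases "a \<in> C"; cases "b \<in> C") blast+

lemma two_sets_partitioning_ends:
  fixes n :: nat
  assumes n: "n \<ge> 5" and C: "C \<subseteq> {2..n-1}" and D: "D \<subseteq> {2..n-1}"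
    and cover: "\<And>i. 2 \<le> i \<Longrightarrow> i < n \<Longrightarrow>
      length (filter (\<lambda>S. i \<in> S) [C, D]) = length (filter (\<lambda>S. i \<in> S) [{2, n - 1}, {}])"
  shows "mset [C, D] = mset [{2, n - 1}, {}] \<or> mset [C, D] = mset [{2}, {n - 1}]"
proof -
  have "(i \<in> C \<or> i \<in> D \<longleftrightarrow> i \<in> {2, n - 1}) \<and> \<not> (i \<in> C \<and> i \<in> D)" for i
  proof (cases "2 \<le> i \<and> i < n")
    case True
    have "length (filter (\<lambda>S. i \<in> S) [C, D]) = (if i \<in> C then 1 else 0) + (if i \<in> D then 1 else 0)"
      "length (filter (\<lambda>S. i \<in> S) [{2, n - 1}, {}]) = (if i \<in> {2, n - 1} then 1 else 0)"
      by simp_all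
    then have "(if i \<in> C then 1 else 0) + (if i \<in> D then 1 else 0) = (if i \<in> {2, n - 1} then 1 else 0 :: nat)"
      using cover[OF True[THEN conjunct1] True[THEN conjunct2]] by presburger
    then show ?thesis
      by (cases "i \<in> C"; cases "i \<in> D"; cases "i \<in> {2, n - 1}") simp_all
  next
    case False
    then have "i \<notin> C" "i \<notin> D" "i \<notin> {2, n - 1}"
      using C D n by auto
    then show ?thesis
      by blast
  qed
  then have C_sub: "C \<subseteq> {2, n - 1}" and D_eq: "D = {2, n - 1} - C"
    by blast+
  have "n - 1 \<noteq> 2"
    using n by simp
  consider "C = {}" | "C = {2}" | "C = {n - 1}" | "C = {2, n - 1}"
    using subset_doubleton_cases[OF C_sub] by blast
  then show ?thesis
  proof cases
    case 1
    then have "D = {2, n - 1}"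
      using D_eq by simp
    then show ?thesis
      using 1 by (simp add: add_mset_commute)
  next
    case 2
    then have "D = {n - 1}"
      using D_eq \<open>n - 1 \<noteq> 2\<close> by auto
    then show ?thesis
      using 2 by simp
  next
    case 3
    then have "D = {2}"
      using D_eq \<open>n - 1 \<noteq> 2\<close> by auto
    then show ?thesis
      using 3 by (simp add: add_mset_commute)
  next
    case 4
    then have "D = {}"
      using D_eq by simp
    then show ?thesis
      using 4 by simp
  qed
qed

lemma cover_equivalent_below_joint_apart:
  assumes n: "n \<ge> 5"
    and TL: "TL = [{2, n - 1}, {}] \<or> TL = [{2}, {n - 1}]"
    and below: "mset Tg \<subseteq># mset TL"
    and len: "length Ta = length Tg"
    and Ta: "set Ta \<subseteq> collider_sets (path_P n)"
    and cover: "\<And>i. 2 \<le> i \<Longrightarrow> i < n \<Longrightarrow>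
      length (filter (\<lambda>S. i \<in> S) Tg) = length (filter (\<lambda>S. i \<in> S) Ta)"
    and ne: "mset Tg \<noteq> mset Ta"
  shows "(mset Tg = mset [{2, n - 1}, {}] \<and> mset Ta = mset [{2}, {n - 1}]) \<or>
         (mset Tg = mset [{2}, {n - 1}] \<and> mset Ta = mset [{2, n - 1}, {}])"
proof -
  have Ta_sub: "S \<subseteq> {2..n-1}" if "S \<in> set Ta" for S
    using Ta that collider_sets_path_P_iff by blast
  have Tg_sub: "S \<subseteq> {2..n-1}" if "S \<in> set Tg" for S
  proof -
    have "S \<in> set TL"
      using that set_mset_mono[OF below] by auto
    then show ?thesis
      using TL n by auto
  qed
  have "length TL = 2"
    using TL by auto
  then have "length Tg \<le> 2"
    using size_mset_mono[OF below] by simp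
  then consider "length Tg = 0" | "length Tg = 1" | "length Tg = 2"
    by linarith
  then show ?thesis
  proof cases
    case 1
    then show ?thesis
      using len ne by simp
  next
    case 2
    then obtain X Z where XZ: "Tg = [X]" "Ta = [Z]"
      using len by (metis One_nat_def length_0_conv length_Suc_conv)
    have "X = Z"
    proof (rule set_eqI)
      fix i
      show "i \<in> X \<longleftrightarrow> i \<in> Z"
      proof (cases "2 \<le> i \<and> i < n")
        case True
        then show ?thesis
          using cover[of i] XZ by (cases "i \<in> X"; cases "i \<in> Z") simp_all
      next
        case False
        then show ?thesis
          using Tg_sub[of X] Ta_sub[of Z] XZ n by auto
      qed
    qed
    then show ?thesis
      using ne XZ by simp
  next
    case 3
    have "\<not> mset Tg \<subset># mset TL"
      using mset_subset_size 3 \<open>length TL = 2\<close> by fastforce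
    then have Tg_TL: "mset Tg = mset TL"
      using below by (simp add: subset_mset.le_less)
    obtain C D where CD: "Ta = [C, D]"
      using len 3 by (metis One_nat_def Suc_1 length_0_conv length_Suc_conv)
    have "length (filter (\<lambda>S. i \<in> S) [C, D]) = length (filter (\<lambda>S. i \<in> S) [{2, n - 1}, {}])"
      if "2 \<le> i" "i < n" for i
    proof -
      have "length (filter (\<lambda>S. i \<in> S) Tg) = length (filter (\<lambda>S. i \<in> S) TL)"
        using Tg_TL by (metis mset_filter size_mset)
      also have "\<dots> = length (filter (\<lambda>S. i \<in> S) [{2, n - 1}, {}])"
        using TL n by (elim disjE) auto
      finally show ?thesis
        using cover[OF that] CD by simp
    qed
    then have "mset Ta = mset [{2, n - 1}, {}] \<or> mset Ta = mset [{2}, {n - 1}]"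
      using two_sets_partitioning_ends[OF n] Ta_sub CD by simp
    with TL show ?thesis
      using Tg_TL ne by (elim disjE) simp_all
  qed
qed

lemma imset_partner_below_joint_apart:
  assumes n: "n \<ge> 5"
    and L: "L = mon_joint n \<or> L = mon_apart n" and dvd: "mon_dvd b L"
    and V: "Poly_Mapping.keys a \<subseteq> collider_sets (path_P n)" "Poly_Mapping.keys b \<subseteq> collider_sets (path_P n)"
    and ne: "a \<noteq> b" and eq: "imset_mon (path_P n) a = imset_mon (path_P n) b"
  shows "(b = mon_joint n \<and> a = mon_apart n) \<or> (b = mon_apart n \<and> a = mon_joint n)"
proof -
  obtain Ta Tb where Ta: "represents Ta a" and Tb: "represents Tb b"
    using represents_exists by meson
  have n3: "n \<noteq> 3"
    using n by simp
  obtain TL where TL: "TL = [{2, n - 1}, {}] \<or> TL = [{2}, {n - 1}]" "represents TL L"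
    using L represents_mon_joint represents_mon_apart[OF n3] by blast
  have "mset Tb \<subseteq># mset TL"
    using dvd Tb TL(2) unfolding subseteq_mset_def mon_dvd_def represents_def by metis
  moreover have set_Ta: "set Ta \<subseteq> collider_sets (path_P n)" and set_Tb: "set Tb \<subseteq> collider_sets (path_P n)"
    using V keys_represents[OF Ta] keys_represents[OF Tb] by simp_all
  moreover have "length Ta = length Tb"
    using lookup_imset_mon_singleton[OF Ta set_Ta] lookup_imset_mon_singleton[OF Tb set_Tb] eq n by simp
  moreover have "length (filter (\<lambda>S. i \<in> S) Tb) = length (filter (\<lambda>S. i \<in> S) Ta)" if "2 \<le> i" "i < n" for i
    using lookup_imset_mon_closed_nbhd[OF Ta set_Ta that] lookup_imset_mon_closed_nbhd[OF Tb set_Tb that] eq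
    by simp
  moreover have "mset Tb \<noteq> mset Ta"
    using represents_mset_eq[OF Tb Ta] ne by blast
  ultimately have "(mset Tb = mset [{2, n - 1}, {}] \<and> mset Ta = mset [{2}, {n - 1}]) \<or>
      (mset Tb = mset [{2}, {n - 1}] \<and> mset Ta = mset [{2, n - 1}, {}])"
    using cover_equivalent_below_joint_apart[OF n TL(1)] by blast
  then show ?thesis
  proof (elim disjE conjE)
    assume "mset Tb = mset [{2, n - 1}, {}]" "mset Ta = mset [{2}, {n - 1}]"
    then show ?thesis
      using represents_mset_eq[OF Tb represents_mon_joint] represents_mset_eq[OF Ta represents_mon_apart[OF n3]]
      by blast
  next
    assume "mset Tb = mset [{2}, {n - 1}]" "mset Ta = mset [{2, n - 1}, {}]"
    then show ?thesis
      using represents_mset_eq[OF Tb represents_mon_apart[OF n3]] represents_mset_eq[OF Ta represents_mon_joint]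
      by blast
  qed
qed

section \<open>Weak Q-homogeneity\<close>

lemma not_cyc_consec: "x < N \<Longrightarrow> 0 < y \<Longrightarrow> y < N \<Longrightarrow> y \<noteq> x + 1 \<Longrightarrow> \<not> cyc_consec N x y"
  unfolding cyc_consec_def by (cases "x + 1 = N") auto

lemma path_P'_eq:
  assumes "n \<ge> 1" "m \<ge> 3"
  shows "path_P' m n = [n - 1..<n - 1 + (m - 2)] @ [1, 2]"
proof -
  have "n + m - 4 + 1 = n - 1 + (m - 2)"
    using assms by linarith
  then show ?thesis
    unfolding path_P'_def by metis
qed

lemma path_P'_nth:
  assumes "n \<ge> 1" "m \<ge> 3" "k < m"
  shows "path_P' m n ! k = (if k < m - 2 then n - 1 + k else if k = m - 2 then 1 else 2)"
proof -
  have len: "length [n - 1..<n - 1 + (m - 2)] = m - 2"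
    by simp
  show ?thesis
  proof (cases "k < m - 2")
    case True
    then show ?thesis
      unfolding path_P'_eq[OF assms(1,2)] using len by (simp add: nth_append del: upt_Suc)
  next
    case False
    then have "k = m - 2 \<or> k = m - 1"
      using assms(3) by linarith
    then show ?thesis
      unfolding path_P'_eq[OF assms(1,2)] using len False assms(2) by (auto simp: nth_append)
  qed
qed

lemma ends_in_collider_sets_path_P':
  assumes n: "n \<ge> 5" and m: "m \<ge> 5"
  shows "{1, n} \<in> collider_sets (path_P' m n)"
proof -
  have length: "length (path_P' m n) = m"
    using n m by (simp add: path_P'_eq)
  have position: "k = 1 \<or> k = m - 2" if "k < m" "path_P' m n ! k \<in> {1, n}" for k
    using that path_P'_nth[OF _ _ that(1)] n m by (auto split: if_splits)
  have "path_P' m n = [n - 1..<n - 1 + (m - 2)] @ [1, 2]"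
    using path_P'_eq n m by simp
  then have "set (butlast (tl (path_P' m n))) = set [n..<n - 1 + (m - 2)] \<union> {1}"
    using n m by (simp add: tl_upt butlast_append del: upt_Suc)
  then have "{1, n} \<subseteq> set (butlast (tl (path_P' m n)))"
    using n m by auto
  moreover have "\<not> (path_P' m n ! k \<in> {1, n} \<and> path_P' m n ! (k + 1) \<in> {1, n})"
    if "k + 1 < length (path_P' m n)" for k
    using that position[of k] position[of "k + 1"] m unfolding length by auto
  ultimately show ?thesis
    unfolding collider_sets_def by blast
qed

context
  fixes m n :: nat
  assumes n: "n \<ge> 5" and m: "m \<ge> 5"
begin

lemma Q_set_empty_joint: "({}, {2, n - 1}) \<in> Q_set m n"
proof -
  have "\<not> cyc_consec (n + m - 4) x y" if "x \<in> {2, n - 1}" "y \<in> {2, n - 1}" for x y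
    by (rule not_cyc_consec) (use that n m in auto)
  then show ?thesis
    unfolding Q_set_def using empty_in_collider_sets collider_sets_joint_apart(1)[OF n] by auto
qed

lemma Q_set_ends_empty: "({1, n}, {}) \<in> Q_set m n"
proof -
  have "\<not> cyc_consec (n + m - 4) x y" if "x \<in> {1, n}" "y \<in> {1, n}" for x y
    by (rule not_cyc_consec) (use that n m in auto)
  then show ?thesis
    unfolding Q_set_def using ends_in_collider_sets_path_P'[OF n m] empty_in_collider_sets by auto
qed

lemma Q_set_empty_singleton: "({}, {2}) \<in> Q_set m n" "({}, {n - 1}) \<in> Q_set m n"
proof -
  have "\<not> cyc_consec (n + m - 4) 2 2" "\<not> cyc_consec (n + m - 4) (n - 1) (n - 1)"
    by (rule not_cyc_consec; use n m in auto)+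
  then show "({}, {2}) \<in> Q_set m n" "({}, {n - 1}) \<in> Q_set m n"
    unfolding Q_set_def using empty_in_collider_sets collider_sets_joint_apart(2,3)[OF n] by auto
qed

end

lemma not_in_Q_set:
  assumes "n \<ge> 5"
  shows "({1, n}, {2}) \<notin> Q_set m n" "({1, n}, {n - 1}) \<notin> Q_set m n" "({}, {}) \<notin> Q_set m n"
proof -
  have "cyc_consec (n + m - 4) 1 2" "cyc_consec (n + m - 4) (n - 1) n"
    unfolding cyc_consec_def using assms by (simp_all add: numeral_2_eq_2)
  then show "({1, n}, {2}) \<notin> Q_set m n" "({1, n}, {n - 1}) \<notin> Q_set m n" "({}, {}) \<notin> Q_set m n"
    unfolding Q_set_def by blast+
qed

lemma weakly_Q_homD:
  assumes "weakly_Q_hom m n le g" and "a \<in> Poly_Mapping.keys g"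
    and "represents Ss (lead_mon le g)" "represents Ts a" and "length Ss = d" "length Ts = d"
  obtains \<sigma> where "\<sigma> permutes {..<d}"
    and "\<And>S's. length S's = d \<Longrightarrow> \<forall>l<d. (S's ! l, Ss ! l) \<in> Q_set m n \<Longrightarrow>
      \<forall>l<d. (S's ! l, Ts ! \<sigma> l) \<in> Q_set m n"
proof -
  obtain d' where deg: "\<forall>a\<in>Poly_Mapping.keys g. mon_deg a = d'"
    and hom: "\<forall>a\<in>Poly_Mapping.keys g. \<forall>Ss Ts. length Ss = d' \<longrightarrow> length Ts = d' \<longrightarrow>
        represents Ss (lead_mon le g) \<longrightarrow> represents Ts a \<longrightarrow>
        (\<exists>\<sigma>. \<sigma> permutes {..<d'} \<and>
           {S's. length S's = d' \<and> (\<forall>l<d'. (S's!l, Ss!l) \<in> Q_set m n)} \<subseteq>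
           {S's. length S's = d' \<and> (\<forall>l<d'. (S's!l, Ts!(\<sigma> l)) \<in> Q_set m n)})"
    using assms(1) unfolding weakly_Q_hom_def by blast
  have "d' = d"
    using deg assms(2) mon_deg_represents[OF assms(4)] assms(6) by auto
  then obtain \<sigma> where "\<sigma> permutes {..<d}" and incl:
    "{S's. length S's = d \<and> (\<forall>l<d. (S's!l, Ss!l) \<in> Q_set m n)} \<subseteq>
     {S's. length S's = d \<and> (\<forall>l<d. (S's!l, Ts!(\<sigma> l)) \<in> Q_set m n)}"
    using hom assms(2-6) by blast
  then show ?thesis
    by (intro that) blast+
qed

lemma not_weakly_Q_hom_lead_joint:
  assumes n: "n \<ge> 5" and m: "m \<ge> 5"
    and lead: "lead_mon le g = mon_joint n" and apart: "mon_apart n \<in> Poly_Mapping.keys g"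
  shows "\<not> weakly_Q_hom m n le g"
proof
  assume hom: "weakly_Q_hom m n le g"
  have n3: "n \<noteq> 3"
    using n by simp
  obtain \<sigma> where \<sigma>: "\<sigma> permutes {..<2}"
    and incl: "\<And>S's. length S's = 2 \<Longrightarrow> \<forall>l<2. (S's ! l, [{2, n - 1}, {}] ! l) \<in> Q_set m n \<Longrightarrow>
      \<forall>l<2. (S's ! l, [{2}, {n - 1}] ! \<sigma> l) \<in> Q_set m n"
    by (rule weakly_Q_homD[OF hom apart represents_mon_joint[of n, folded lead] represents_mon_apart[OF n3], where d = 2]) auto
  have "\<forall>l<2. ([{}, {1, n}] ! l, [{2}, {n - 1}] ! \<sigma> l) \<in> Q_set m n"
    by (rule incl) (use Q_set_empty_joint[OF n m] Q_set_ends_empty[OF n m] in \<open>auto simp: less_2_cases_iff\<close>)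
  then have "({1, n}, [{2}, {n - 1}] ! \<sigma> 1) \<in> Q_set m n"
    by (simp add: numeral_2_eq_2 All_less_Suc)
  moreover have "\<sigma> 1 < 2"
    using permutes_in_image[OF \<sigma>] by simp
  ultimately show False
    using not_in_Q_set[OF n] by (auto simp: less_2_cases_iff)
qed

lemma not_weakly_Q_hom_lead_apart:
  assumes n: "n \<ge> 5" and m: "m \<ge> 5"
    and lead: "lead_mon le g = mon_apart n" and joint: "mon_joint n \<in> Poly_Mapping.keys g"
  shows "\<not> weakly_Q_hom m n le g"
proof
  assume hom: "weakly_Q_hom m n le g"
  have n3: "n \<noteq> 3"
    using n by simp
  obtain \<sigma> where \<sigma>: "\<sigma> permutes {..<2}"
    and incl: "\<And>S's. length S's = 2 \<Longrightarrow> \<forall>l<2. (S's ! l, [{2}, {n - 1}] ! l) \<in> Q_set m n \<Longrightarrow>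
      \<forall>l<2. (S's ! l, [{2, n - 1}, {}] ! \<sigma> l) \<in> Q_set m n"
    by (rule weakly_Q_homD[OF hom joint represents_mon_apart[OF n3, folded lead] represents_mon_joint, where d = 2]) auto
  have "\<forall>l<2. ([{}, {}] ! l, [{2, n - 1}, {}] ! \<sigma> l) \<in> Q_set m n"
    by (rule incl) (use Q_set_empty_singleton[OF n m] in \<open>auto simp: less_2_cases_iff\<close>)
  moreover have "1 \<in> \<sigma> ` {..<2}"
    using permutes_image[OF \<sigma>] by simp
  then obtain l where l: "l < 2" "\<sigma> l = 1"
    by auto
  moreover have "[{}, {}] ! l = ({} :: nat set)"
    using less_2_cases[OF l(1)] by auto
  ultimately have "({}, {}) \<in> Q_set m n"
    by force
  then show False
    using not_in_Q_set(3)[OF n] by blast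
qed

theorem proposition5p3:
  fixes m n :: nat
  assumes "m \<ge> 5" and "n \<ge> 5"
  shows "\<not> (\<exists>(le :: monom \<Rightarrow> monom \<Rightarrow> bool) (G :: ('k::field) ypoly set).
            term_order (collider_sets (path_P n)) le \<and>
            groebner_basis le (imset_ideal (path_P n)) G \<and>
            (\<forall>g\<in>G. weakly_Q_hom m n le g))"
proof (intro notI, elim exE conjE)
  fix le and G :: "'k ypoly set"
  assume order: "term_order (collider_sets (path_P n)) le"
    and gb: "groebner_basis le (imset_ideal (path_P n)) G" and hom: "\<forall>g\<in>G. weakly_Q_hom m n le g"
  let ?f = "binom_joint_apart n :: 'k ypoly"
  have f: "?f \<in> imset_ideal (path_P n)" "?f \<noteq> 0"
    using binom_joint_apart_in_imset_ideal[OF assms(2)] binom_joint_apart_nonzero by blast+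
  then obtain g where g: "g \<in> G" "g \<in> imset_ideal (path_P n)" "g \<noteq> 0"
    and dvd: "mon_dvd (lead_mon le g) (lead_mon le ?f)"
    using gb unfolding groebner_basis_def by blast
  obtain a where a: "a \<in> Poly_Mapping.keys g" "a \<noteq> lead_mon le g"
    "imset_mon (path_P n) a = imset_mon (path_P n) (lead_mon le g)"
    using imset_ideal_lead_partner[OF order g(2,3)] by blast
  have "lead_mon le ?f = mon_joint n \<or> lead_mon le ?f = mon_apart n"
    using lead_mon_in_keys_imset_ideal[OF order f] keys_binom_joint_apart by blast
  then have "(lead_mon le g = mon_joint n \<and> a = mon_apart n) \<or> (lead_mon le g = mon_apart n \<and> a = mon_joint n)"
    using imset_partner_below_joint_apart[OF assms(2) _ dvd] a imset_ideal_keys_subset[OF g(2)]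
      lead_mon_in_keys_imset_ideal[OF order g(2,3)] by blast
  then show False
    using not_weakly_Q_hom_lead_joint[OF assms(2,1)] not_weakly_Q_hom_lead_apart[OF assms(2,1)] a(1) g(1) hom
    by blast
qed

end
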